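(* Let $ABC$ be a nondegenerate triangle whose circumcenter $O$ does not lie on any of the lines $BC$, $CA$, $AB$ (i.e. $ABC$ is not right-angled). If $XYZ$ is a Miquel triangle of $P=O$ relative to $ABC$, then $O$ is the orthocenter of triangle $XYZ$.
   Context: Miquel triangle: given a triangle $ABC$ and a point $P$ not on the lines $BC,CA,AB$, a triangle $XYZ$ with $X$ on line $BC$, $Y$ on line $CA$, $Z$ on line $AB$ is called a Miquel triangle of $P$ relative to $ABC$ if $P$ lies on each of the three circles through $A,Y,Z$, through $B,Z,X$, and through $C,X,Y$. *)

theory Defs
  imports "HOL-Analysis.Analysis"
begin

text \<open>Points of the Euclidean plane are modelled as vectors in real^2.
  Line through two distinct points U, V: affine hull {U, V}.\<close>

definition on_circle_through :: "real^2 \<Rightarrow> real^2 \<Rightarrow> real^2 \<Rightarrow> real^2 \<Rightarrow> bool" where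
  "on_circle_through P U V W \<longleftrightarrow> \<not> collinear {U, V, W} \<and>
     (\<exists>c. dist c U = dist c V \<and> dist c U = dist c W \<and> dist c U = dist c P)"

definition miquel_triangle ::
  "real^2 \<Rightarrow> real^2 \<Rightarrow> real^2 \<Rightarrow> real^2 \<Rightarrow> real^2 \<Rightarrow> real^2 \<Rightarrow> real^2 \<Rightarrow> bool" where
  "miquel_triangle P A B C X Y Z \<longleftrightarrow>
     \<not> collinear {X, Y, Z} \<and>
     X \<in> affine hull {B, C} \<and> Y \<in> affine hull {C, A} \<and> Z \<in> affine hull {A, B} \<and>
     on_circle_through P A Y Z \<and> on_circle_through P B Z X \<and> on_circle_through P C X Y"

definition is_orthocenter :: "real^2 \<Rightarrow> real^2 \<Rightarrow> real^2 \<Rightarrow> real^2 \<Rightarrow> bool" where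
  "is_orthocenter H X Y Z \<longleftrightarrow> \<not> collinear {X, Y, Z} \<and>
     inner (H - X) (Y - Z) = 0 \<and> inner (H - Y) (Z - X) = 0 \<and> inner (H - Z) (X - Y) = 0"

end

theory Submission
  imports Defs
begin

text \<open>Put the circumcentre Q at the origin and let J be the rotation by a right angle. Since Q
  projects onto each side at its midpoint M, every point of that side has the form
  (I + t J) M, i.e. it is the image of M under a spiral similarity about Q. A circle through Q
  and a vertex meets the two sides at that vertex in points whose parameters t determine its
  centre; as the centre is the same, both parameters agree. Hence one spiral similarity about Q
  maps the medial triangle onto XYZ, and it carries the orthocentre Q of the medial triangle to
  the orthocentre of XYZ.\<close>

definition rot90 :: "real^2 \<Rightarrow> real^2" where
  "rot90 v = vector [- v$2, v$1]"

lemma rot90_component [simp]: "rot90 v $ 1 = - v $ 2" "rot90 v $ 2 = v $ 1"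
  by (simp_all add: rot90_def)

lemma rot90_add [simp]: "rot90 (u + v) = rot90 u + rot90 v"
  and rot90_diff [simp]: "rot90 (u - v) = rot90 u - rot90 v"
  and rot90_scaleR [simp]: "rot90 (c *\<^sub>R v) = c *\<^sub>R rot90 v"
  and rot90_rot90 [simp]: "rot90 (rot90 v) = - v"
  and rot90_eq_0_iff [simp]: "rot90 v = 0 \<longleftrightarrow> v = 0"
  by (auto simp: vec_eq_iff forall_2)

lemma inner_rot90_rot90 [simp]: "inner (rot90 u) (rot90 v) = inner u v"
  and inner_rot90_self [simp]: "inner v (rot90 v) = 0" "inner (rot90 v) v = 0"
  by (simp_all add: inner_vec_def sum_2 algebra_simps)

lemma orthogonal_imp_multiple_rot90:
  assumes "inner w m = 0" "m \<noteq> 0"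
  obtains \<mu> where "w = \<mu> *\<^sub>R rot90 m"
proof
  have "inner m m \<noteq> 0" using assms(2) by simp
  then show "w = (inner w (rot90 m) / inner m m) *\<^sub>R rot90 m"
    using assms(1) by (simp add: vec_eq_iff forall_2 inner_vec_def sum_2 field_simps) algebra
qed

lemma inner_eq_on_rot90_basis_imp_eq:
  assumes "m \<noteq> 0" "inner u m = inner v m" "inner u (rot90 m) = inner v (rot90 m)"
  shows "u = v"
proof -
  have "inner (u - v) m = 0" using assms(2) by (simp add: inner_diff_left)
  then obtain \<mu> where \<mu>: "u - v = \<mu> *\<^sub>R rot90 m"
    using assms(1) by (rule orthogonal_imp_multiple_rot90)
  have "\<mu> * inner m m = 0"
    using assms(3) arg_cong[OF \<mu>, of "\<lambda>w. inner w (rot90 m)"] by (simp add: inner_diff_left)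
  then show ?thesis using assms(1) \<mu> by simp
qed

text \<open>Multiplication by the complex number 1 + i t: a rotation composed with a dilation.\<close>

definition spiral :: "real \<Rightarrow> real^2 \<Rightarrow> real^2" where
  "spiral t v = v + t *\<^sub>R rot90 v"

lemma spiral_diff: "spiral t u - spiral t v = spiral t (u - v)"
  by (simp add: spiral_def algebra_simps)

lemma inner_spiral_spiral: "inner (spiral t u) (spiral t v) = (1 + t\<^sup>2) * inner u v"
proof -
  have "inner (rot90 u) v = - inner u (rot90 v)"
    by (simp add: inner_vec_def sum_2 algebra_simps)
  then show ?thesis
    by (simp add: spiral_def power2_eq_square algebra_simps)
qed

lemma spiral_cancel:
  assumes "spiral s v = spiral t v" "v \<noteq> 0"
  shows "s = t"
proof -
  have "(s - t) *\<^sub>R rot90 v = 0" using assms(1) by (simp add: spiral_def algebra_simps)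
  then show ?thesis using assms(2) by simp
qed

lemma on_circle_through_origin_iff:
  "dist k p = dist k 0 \<longleftrightarrow> inner p p = 2 * inner k p"
proof -
  have "dist k p = dist k 0 \<longleftrightarrow> inner (k - p) (k - p) = inner k k"
    by (simp add: dist_norm norm_eq_sqrt_inner)
  then show ?thesis by (simp add: inner_diff_left inner_diff_right inner_commute)
qed

lemma center_of_circle_through_origin:
  assumes "m \<noteq> 0" "\<sigma> \<noteq> \<tau>"
    and "dist k (spiral \<sigma> m) = dist k 0" "dist k (spiral \<tau> m) = dist k 0"
  shows "2 *\<^sub>R k = spiral \<tau> (spiral \<sigma> m)"
proof -
  define N where "N = inner m m"
  define \<alpha> where "\<alpha> = 2 * inner k m"
  define \<beta> where "\<beta> = 2 * inner k (rot90 m)"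
  have on_circle: "(1 + t\<^sup>2) * N = \<alpha> + t * \<beta>" if "dist k (spiral t m) = dist k 0" for t
    using that unfolding on_circle_through_origin_iff inner_spiral_spiral
    by (simp add: N_def \<alpha>_def \<beta>_def spiral_def algebra_simps)
  have "(\<sigma> - \<tau>) * ((\<sigma> + \<tau>) * N - \<beta>) = 0"
    using on_circle[OF assms(3)] on_circle[OF assms(4)] by algebra
  then have \<beta>: "\<beta> = (\<sigma> + \<tau>) * N" using assms(2) by simp
  then have \<alpha>: "\<alpha> = (1 - \<sigma> * \<tau>) * N"
    using on_circle[OF assms(3)] by (simp add: power2_eq_square algebra_simps)
  show ?thesis
  proof (rule inner_eq_on_rot90_basis_imp_eq[OF assms(1)])
    show "inner (2 *\<^sub>R k) m = inner (spiral \<tau> (spiral \<sigma> m)) m"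
      using \<alpha> by (simp add: N_def \<alpha>_def spiral_def algebra_simps)
    show "inner (2 *\<^sub>R k) (rot90 m) = inner (spiral \<tau> (spiral \<sigma> m)) (rot90 m)"
      using \<beta> by (simp add: N_def \<beta>_def spiral_def algebra_simps)
  qed
qed

lemma midpoint_minus_circumcenter_orthogonal:
  assumes "dist Q B = dist Q C"
  shows "inner (midpoint B C - Q) (C - B) = 0"
proof -
  define u w where "u = B - Q" and "w = C - Q"
  have "midpoint B C - Q = (1/2) *\<^sub>R (u + w)" "C - B = w - u"
    by (simp_all add: u_def w_def midpoint_def vec_eq_iff field_simps)
  moreover have "norm u = norm w"
    using assms by (simp add: u_def w_def dist_norm norm_minus_commute)
  then have "inner u u = inner w w" by (metis power2_norm_eq_inner)
  ultimately show ?thesis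
    by (simp add: inner_add_left inner_add_right inner_diff_left inner_diff_right inner_commute)
qed

lemma point_on_side_eq_spiral:
  assumes "dist Q A = dist Q C" "Q \<notin> affine hull {A, C}" "Y \<in> affine hull {A, C}"
  obtains t where "Y - Q = spiral t (midpoint A C - Q)"
proof -
  define m where "m = midpoint A C - Q"
  have "midpoint A C \<in> affine hull {A, C}"
    unfolding affine_hull_2 midpoint_def by (auto simp: scaleR_add_right intro!: exI[of _ "1/2"])
  then have "m \<noteq> 0" using assms(2) by (auto simp: m_def)
  moreover have "inner (C - A) m = 0"
    using midpoint_minus_circumcenter_orthogonal[OF assms(1)] by (simp add: m_def inner_commute)
  ultimately obtain \<mu> where \<mu>: "C - A = \<mu> *\<^sub>R rot90 m"
    using orthogonal_imp_multiple_rot90 by blast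
  obtain u v where "u + v = 1" "Y = u *\<^sub>R A + v *\<^sub>R C"
    using assms(3) unfolding affine_hull_2 by blast
  then have Y: "Y = (1 - v) *\<^sub>R A + v *\<^sub>R C" by (simp add: eq_diff_eq)
  have "Y - Q = m + (v - 1/2) *\<^sub>R (C - A)"
    unfolding Y m_def midpoint_def by (simp add: vec_eq_iff field_simps)
  then have "Y - Q = spiral ((v - 1/2) * \<mu>) m"
    by (simp add: \<mu> spiral_def)
  then show ?thesis using that m_def by blast
qed

lemma center_of_circle_through_circumcenter:
  assumes "dist Q A = dist Q C" "Q \<notin> affine hull {A, C}"
    and "Y - Q = spiral t (midpoint A C - Q)" "Y \<noteq> A"
    and "dist K A = dist K Q" "dist K Y = dist K Q"
  shows "2 *\<^sub>R (K - Q) = spiral t (A - Q)"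
proof -
  define m where "m = midpoint A C - Q"
  obtain \<sigma> where \<sigma>: "A - Q = spiral \<sigma> m"
    using point_on_side_eq_spiral[OF assms(1,2) hull_inc] unfolding m_def by blast
  have "m \<noteq> 0" using \<sigma> assms(3,4) by (auto simp: m_def spiral_def)
  moreover have "\<sigma> \<noteq> t"
  proof
    assume "\<sigma> = t"
    then have "A - Q = Y - Q" using \<sigma> assms(3) by (simp add: m_def)
    then show False using assms(4) by simp
  qed
  moreover have "dist (K - Q) (A - Q) = dist (K - Q) 0" "dist (K - Q) (Y - Q) = dist (K - Q) 0"
    using assms(5,6) by (simp_all add: dist_norm)
  then have "dist (K - Q) (spiral \<sigma> m) = dist (K - Q) 0"
    "dist (K - Q) (spiral t m) = dist (K - Q) 0"
    unfolding \<sigma> assms(3)[folded m_def] .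
  ultimately show ?thesis
    using center_of_circle_through_origin \<sigma> by simp
qed

lemma spiral_parameters_eq_on_circle_through_circumcenter:
  assumes "dist Q A = dist Q B" "dist Q A = dist Q C"
    and "Q \<notin> affine hull {A, B}" "Q \<notin> affine hull {A, C}"
    and "Y - Q = spiral s (midpoint A C - Q)" "Z - Q = spiral t (midpoint A B - Q)"
    and "on_circle_through Q A Y Z"
  shows "s = t"
proof -
  obtain K where K: "dist K A = dist K Y" "dist K A = dist K Z" "dist K A = dist K Q"
    and "\<not> collinear {A, Y, Z}"
    using assms(7) unfolding on_circle_through_def by blast
  then have "Y \<noteq> A" "Z \<noteq> A" by (auto simp: insert_commute)
  moreover have "dist K Y = dist K Q" "dist K Z = dist K Q" using K by simp_all
  ultimately have "2 *\<^sub>R (K - Q) = spiral s (A - Q)" "2 *\<^sub>R (K - Q) = spiral t (A - Q)"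
    using center_of_circle_through_circumcenter[OF assms(2,4,5) _ K(3)] center_of_circle_through_circumcenter[OF assms(1,3,6) _ K(3)]
    by blast+
  then have "spiral s (A - Q) = spiral t (A - Q)" by simp
  moreover have "A - Q \<noteq> 0" using assms(3) hull_inc[of A "{A, B}"] by auto
  ultimately show ?thesis by (rule spiral_cancel)
qed

lemma altitude_through_circumcenter:
  assumes "dist Q B = dist Q C"
    and "X - Q = spiral t (midpoint B C - Q)" "Y - Q = spiral t (midpoint C A - Q)"
    and "Z - Q = spiral t (midpoint A B - Q)"
  shows "inner (Q - X) (Y - Z) = 0"
proof -
  have "Y - Z = (Y - Q) - (Z - Q)" by simp
  also have "\<dots> = spiral t ((1/2) *\<^sub>R (C - B))"
    unfolding assms(3,4) spiral_diff by (simp add: midpoint_def vec_eq_iff field_simps)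
  finally have "inner (X - Q) (Y - Z) = (1 + t\<^sup>2) * inner (midpoint B C - Q) ((1/2) *\<^sub>R (C - B))"
    unfolding assms(2) by (simp only: inner_spiral_spiral)
  moreover have "inner (Q - X) (Y - Z) = - inner (X - Q) (Y - Z)"
    by (simp add: inner_diff_left)
  ultimately show ?thesis using midpoint_minus_circumcenter_orthogonal[OF assms(1)] by simp
qed

lemma is_orthocenter_spiral_medial_triangle:
  assumes "dist Q A = dist Q B" "dist Q B = dist Q C" "\<not> collinear {X, Y, Z}"
    and "X - Q = spiral t (midpoint B C - Q)" "Y - Q = spiral t (midpoint C A - Q)"
    and "Z - Q = spiral t (midpoint A B - Q)"
  shows "is_orthocenter Q X Y Z"
proof -
  have "dist Q C = dist Q A" using assms(1,2) by simp
  then show ?thesis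
    unfolding is_orthocenter_def
    using assms(3) altitude_through_circumcenter[OF assms(2,4,5,6)]
      altitude_through_circumcenter[OF _ assms(5,6,4)] altitude_through_circumcenter[OF assms(1,6,4,5)]
    by blast
qed

theorem theorem5:
  fixes A B C Q X Y Z :: "real^2"
  assumes "\<not> collinear {A, B, C}"
    and "dist Q A = dist Q B" and "dist Q B = dist Q C"
    and "Q \<notin> affine hull {B, C}" and "Q \<notin> affine hull {C, A}" and "Q \<notin> affine hull {A, B}"
    and "miquel_triangle Q A B C X Y Z"
  shows "is_orthocenter Q X Y Z"
proof -
  have miquel: "\<not> collinear {X, Y, Z}" "X \<in> affine hull {B, C}" "Y \<in> affine hull {C, A}"
    "Z \<in> affine hull {A, B}" "on_circle_through Q A Y Z" "on_circle_through Q B Z X"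
    using assms(7) unfolding miquel_triangle_def by auto
  have QA: "dist Q A = dist Q C" "dist Q C = dist Q A" and QB: "dist Q B = dist Q A"
    using assms(2,3) by simp_all
  have hulls: "Q \<notin> affine hull {A, C}" "Q \<notin> affine hull {B, A}"
    using assms(5,6) by (simp_all add: insert_commute)
  obtain tx where X: "X - Q = spiral tx (midpoint B C - Q)"
    using point_on_side_eq_spiral[OF assms(3,4) miquel(2)] .
  obtain ty where Y: "Y - Q = spiral ty (midpoint C A - Q)"
    using point_on_side_eq_spiral[OF QA(2) assms(5) miquel(3)] .
  obtain tz where Z: "Z - Q = spiral tz (midpoint A B - Q)"
    using point_on_side_eq_spiral[OF assms(2,6) miquel(4)] .
  have "ty = tz"
    using spiral_parameters_eq_on_circle_through_circumcenter[OF assms(2) QA(1) assms(6) hulls(1) _ Z miquel(5)] Y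
    by (simp add: midpoint_sym)
  moreover have "tz = tx"
    using spiral_parameters_eq_on_circle_through_circumcenter[OF assms(3) QB assms(4) hulls(2) _ X miquel(6)] Z
    by (simp add: midpoint_sym)
  ultimately show ?thesis
    using is_orthocenter_spiral_medial_triangle[OF assms(2,3) miquel(1) X] Y Z by simp
qed

end
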